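(* Let $\pi$ be a polygon without self-intersections with edges $\pi_1,\dots,\pi_R$, and let $\lambda_r=\lambda(v_r)$ where $v_r$ is a direction vector of $\pi_r$. For $k\in\mathbb N$ let $B_k\pi=\{kx:x\in\pi\}$ and let $L_k\pi$ be the lattice approximation of $B_k\pi$. Then $$\lim_{k\to\infty}\frac{|L_k\pi|}{\operatorname{length}B_k\pi}=\sum_{r=1}^R\frac{1}{\sqrt{1+\lambda_r^2}}\,\frac{\operatorname{length}\pi_r}{\operatorname{length}\pi}.$$
   Context: $\lambda(v)=\min(|v_2/v_1|,|v_1/v_2|)\in[0,1]$ for $v=(v_1,v_2)\ne0$. Lattice approximation of a nondegenerate segment $s$ with direction $v$: if $|v_2|\le|v_1|$ write $s=\{(x,\lambda x+b):x\in I\}$, $\lambda=v_2/v_1$, $L(s)=\{(z,\lfloor\lambda z+b\rfloor):z\in I\cap\mathbb Z\}$; otherwise write $s=\{(\mu y+b,y):y\in J\}$, $\mu=v_1/v_2$, $L(s)=\{(\lfloor\mu z+b\rfloor,z):z\in J\cap\mathbb Z\}$. The lattice approximation of a polygon is the union of the lattice approximations of its edges. Lengths are Euclidean. *)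

theory Defs
  imports "HOL-Analysis.Analysis"
begin

text \<open>Points of the plane are pairs of reals; the metric on real \<times> real is Euclidean.\<close>

definition lam :: "real \<times> real \<Rightarrow> real" where
  "lam v = min \<bar>snd v / fst v\<bar> \<bar>fst v / snd v\<bar>"

definition seg_lattice :: "real \<times> real \<Rightarrow> real \<times> real \<Rightarrow> (int \<times> int) set" where
  "seg_lattice a b =
    (let v = b - a in
     if \<bar>snd v\<bar> \<le> \<bar>fst v\<bar> then
       (let l = snd v / fst v; c = snd a - l * fst a in
        {(z, \<lfloor>l * of_int z + c\<rfloor>) | z. min (fst a) (fst b) \<le> of_int z \<and> of_int z \<le> max (fst a) (fst b)})
     else
       (let m = fst v / snd v; c = fst a - m * snd a in
        {(\<lfloor>m * of_int z + c\<rfloor>, z) | z. min (snd a) (snd b) \<le> of_int z \<and> of_int z \<le> max (snd a) (snd b)}))"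

text \<open>A polygon with R vertices p 0, ..., p (R-1); edge r joins p r and p ((r+1) mod R).\<close>
definition simple_polygon :: "nat \<Rightarrow> (nat \<Rightarrow> real \<times> real) \<Rightarrow> bool" where
  "simple_polygon R p \<longleftrightarrow> R \<ge> 3 \<and> inj_on p {..<R} \<and>
     (\<forall>i<R. \<forall>j<R. i \<noteq> j \<longrightarrow>
        closed_segment (p i) (p (Suc i mod R)) \<inter> closed_segment (p j) (p (Suc j mod R))
          \<subseteq> {p i, p (Suc i mod R)} \<inter> {p j, p (Suc j mod R)})"

definition polygon_lattice :: "nat \<Rightarrow> (nat \<Rightarrow> real \<times> real) \<Rightarrow> (int \<times> int) set" where
  "polygon_lattice R p = (\<Union>r<R. seg_lattice (p r) (p (Suc r mod R)))"

definition perimeter :: "nat \<Rightarrow> (nat \<Rightarrow> real \<times> real) \<Rightarrow> real" where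
  "perimeter R p = (\<Sum>r<R. dist (p r) (p (Suc r mod R)))"

end

theory Submission
  imports Defs
begin

(* For a direction v = (v1, v2) let cheb_length v = max |v1| |v2| be its
   Chebyshev length; then |v| / sqrt (1 + lam v^2) = cheb_length v.  The lattice
   approximation of a segment [a, b] picks one lattice point per integer abscissa (or
   ordinate) in the range of the dominant coordinate, so it has cheb_length (b - a) points
   up to an error of 1, and each of its points lies within distance 1 of the segment.
   Two edges of a simple polygon meet at most in a common vertex w, and near w they
   separate at a linear rate: delta * dist x w <= dist x y for x, y on the two edges.
   Hence the lattice points shared by the approximations of two dilated edges stay in a
   disc of bounded radius around the dilated vertex, so their number is bounded
   independently of the dilation factor k.  By a Bonferroni-type inequality the lattice
   approximation of the polygon dilated by k therefore has k * (sum of the Chebyshev edge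
   lengths) + O(1) points; dividing by the perimeter k * perimeter gives the limit. *)

definition cheb_length :: "real \<times> real \<Rightarrow> real" where
  "cheb_length v = max \<bar>fst v\<bar> \<bar>snd v\<bar>"

lemma cheb_length_scaleR: "0 \<le> k \<Longrightarrow> cheb_length (k *\<^sub>R v) = k * cheb_length v"
  by (simp add: cheb_length_def abs_mult max_mult_distrib_left)

lemma lam_swap: "lam (prod.swap v) = lam v"
  by (simp add: lam_def min.commute)

lemma lam_flat:
  assumes "\<bar>y\<bar> \<le> \<bar>x\<bar>" shows "lam (x, y) = \<bar>y / x\<bar>"
proof (cases "y = 0")
  case False
  hence "\<bar>y / x\<bar> \<le> 1" "1 \<le> \<bar>x / y\<bar>"
    using assms by (auto simp: abs_divide divide_le_eq_1 le_divide_eq_1)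
  thus ?thesis by (simp add: lam_def min_def)
qed (simp add: lam_def)

lemma norm_div_sqrt_lam_flat:
  fixes x y :: real
  assumes "\<bar>y\<bar> \<le> \<bar>x\<bar>"
  shows "norm (x, y) / sqrt (1 + (lam (x, y))\<^sup>2) = \<bar>x\<bar>"
proof (cases "x = 0")
  case True thus ?thesis using assms by simp
next
  case False
  have "1 + (lam (x, y))\<^sup>2 = (x\<^sup>2 + y\<^sup>2) / x\<^sup>2"
    using False by (simp add: lam_flat[OF assms] power_divide field_simps)
  hence "sqrt (1 + (lam (x, y))\<^sup>2) = norm (x, y) / \<bar>x\<bar>"
    by (simp add: real_sqrt_divide norm_Pair)
  moreover have "norm (x, y) > 0" using False by (simp add: zero_prod_def)
  ultimately show ?thesis using False by simp
qed

(* The Euclidean length divided by sqrt (1 + lam^2) is the Chebyshev length; this turns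
   the right-hand side of the main theorem into a ratio of Chebyshev lengths. *)
lemma norm_div_sqrt_lam: "norm v / sqrt (1 + (lam v)\<^sup>2) = cheb_length v"
proof (cases "\<bar>snd v\<bar> \<le> \<bar>fst v\<bar>")
  case True
  thus ?thesis using norm_div_sqrt_lam_flat[of "snd v" "fst v"]
    by (cases v) (simp add: cheb_length_def max_def)
next
  case False
  obtain x y where v: "v = (x, y)" by (cases v)
  have "norm (x, y) = norm (y, x)" by (simp add: norm_Pair add.commute)
  moreover have "lam (x, y) = lam (y, x)" using lam_swap[of "(y, x)"] by simp
  ultimately show ?thesis using norm_div_sqrt_lam_flat[of x y] False
    by (simp add: v cheb_length_def max_def)
qed

lemma card_integer_interval:
  fixes lo hi :: real
  assumes "lo \<le> hi"
  shows "\<bar>real (card {\<lceil>lo\<rceil>..\<lfloor>hi\<rfloor>}) - (hi - lo)\<bar> \<le> 1"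
proof -
  have bounds: "real_of_int \<lfloor>hi\<rfloor> \<le> hi" "hi < real_of_int \<lfloor>hi\<rfloor> + 1"
       "lo \<le> real_of_int \<lceil>lo\<rceil>" "real_of_int \<lceil>lo\<rceil> < lo + 1" by linarith+
  have card: "real (card {\<lceil>lo\<rceil>..\<lfloor>hi\<rfloor>}) = max 0 (real_of_int \<lfloor>hi\<rfloor> - real_of_int \<lceil>lo\<rceil> + 1)"
    by (simp add: max_def)
  show ?thesis using bounds assms unfolding card by linarith
qed

lemma seg_lattice_flat:
  assumes "\<bar>snd (b - a)\<bar> \<le> \<bar>fst (b - a)\<bar>"
  shows "seg_lattice a b =
    (\<lambda>z. (z, \<lfloor>snd (b - a) / fst (b - a) * of_int z + (snd a - snd (b - a) / fst (b - a) * fst a)\<rfloor>))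
      ` {\<lceil>min (fst a) (fst b)\<rceil>..\<lfloor>max (fst a) (fst b)\<rfloor>}"
  using assms by (auto simp: seg_lattice_def Let_def ceiling_le_iff le_floor_iff)

lemma seg_lattice_steep:
  assumes "\<not> \<bar>snd (b - a)\<bar> \<le> \<bar>fst (b - a)\<bar>"
  shows "seg_lattice a b = prod.swap ` seg_lattice (prod.swap a) (prod.swap b)"
  using assms by (auto simp: seg_lattice_def Let_def image_iff)

lemma card_seg_lattice_flat:
  assumes flat: "\<bar>snd (b - a)\<bar> \<le> \<bar>fst (b - a)\<bar>"
  shows "finite (seg_lattice a b) \<and> \<bar>real (card (seg_lattice a b)) - cheb_length (b - a)\<bar> \<le> 1"
proof -
  let ?I = "{\<lceil>min (fst a) (fst b)\<rceil>..\<lfloor>max (fst a) (fst b)\<rfloor>}"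
  have "card (seg_lattice a b) = card ?I"
    unfolding seg_lattice_flat[OF flat] by (rule card_image) (auto simp: inj_on_def)
  moreover have "cheb_length (b - a) = max (fst a) (fst b) - min (fst a) (fst b)"
    using flat by (auto simp: cheb_length_def max_def min_def abs_if)
  ultimately show ?thesis
    using card_integer_interval[of "min (fst a) (fst b)" "max (fst a) (fst b)"]
    by (simp add: seg_lattice_flat[OF flat])
qed

lemma card_seg_lattice:
  "finite (seg_lattice a b) \<and> \<bar>real (card (seg_lattice a b)) - cheb_length (b - a)\<bar> \<le> 1"
proof (cases "\<bar>snd (b - a)\<bar> \<le> \<bar>fst (b - a)\<bar>")
  case True thus ?thesis by (rule card_seg_lattice_flat)
next
  case False
  have "\<bar>snd (prod.swap b - prod.swap a)\<bar> \<le> \<bar>fst (prod.swap b - prod.swap a)\<bar>"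
    using False by (cases a, cases b) simp
  from card_seg_lattice_flat[OF this] show ?thesis
    unfolding seg_lattice_steep[OF False]
    by (cases a, cases b) (simp add: card_image cheb_length_def max.commute)
qed

definition of_lattice :: "int \<times> int \<Rightarrow> real \<times> real" where
  "of_lattice q = (of_int (fst q), of_int (snd q))"

lemma graph_point_in_segment:
  fixes a b :: "real \<times> real" and z :: real
  assumes "fst a \<noteq> fst b" "min (fst a) (fst b) \<le> z" "z \<le> max (fst a) (fst b)"
  shows "(z, snd a + snd (b - a) / fst (b - a) * (z - fst a)) \<in> closed_segment a b"
proof -
  define u where "u = (z - fst a) / (fst b - fst a)"
  have "0 \<le> u \<and> u \<le> 1"
    using assms by (cases "fst a < fst b") (auto simp: u_def divide_le_eq_1 divide_nonpos_neg zero_le_divide_iff)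
  moreover have "(z, snd a + snd (b - a) / fst (b - a) * (z - fst a)) = (1 - u) *\<^sub>R a + u *\<^sub>R b"
  proof -
    have step: "u * (fst b - fst a) = z - fst a" using assms(1) by (simp add: u_def)
    have "(1 - u) * s + u * t = s + u * (t - s)" for s t :: real by algebra
    thus ?thesis using step by (simp add: prod_eq_iff u_def)
  qed
  ultimately show ?thesis unfolding in_segment by blast
qed

(* Flat case of seg_lattice_near_segment: the lattice point (z, floor y) is within
   distance 1 of the point (z, y) of the segment. *)
lemma seg_lattice_near_segment_flat:
  assumes flat: "\<bar>snd (b - a)\<bar> \<le> \<bar>fst (b - a)\<bar>" and q: "q \<in> seg_lattice a b"
  shows "\<exists>x\<in>closed_segment a b. dist (of_lattice q) x < 1"
proof -
  define l where "l = snd (b - a) / fst (b - a)"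
  obtain z where z: "q = (z, \<lfloor>l * of_int z + (snd a - l * fst a)\<rfloor>)"
    "min (fst a) (fst b) \<le> of_int z" "of_int z \<le> max (fst a) (fst b)"
    using q unfolding seg_lattice_flat[OF flat] l_def by (auto simp: ceiling_le_iff le_floor_iff)
  define x where "x = (real_of_int z, snd a + l * (of_int z - fst a))"
  have "dist (of_lattice q) x < 1"
    using floor_correct[of "snd a + l * (of_int z - fst a)"]
    by (simp add: x_def z(1) of_lattice_def dist_Pair_Pair dist_real_def algebra_simps)
  moreover have "x \<in> closed_segment a b"
  proof (cases "fst a = fst b")
    case True
    hence "a = b" using flat by (simp add: prod_eq_iff)
    thus ?thesis using z True by (simp add: x_def l_def)
  next
    case False
    thus ?thesis using graph_point_in_segment[OF False z(2,3)] by (simp add: x_def l_def)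
  qed
  ultimately show ?thesis by blast
qed

lemma closed_segment_swap:
  "closed_segment (prod.swap a) (prod.swap b) = prod.swap ` closed_segment a b"
  by (rule closed_segment_linear_image) (auto simp: linear_iff)

lemma seg_lattice_near_segment:
  assumes q: "q \<in> seg_lattice a b"
  shows "\<exists>x\<in>closed_segment a b. dist (of_lattice q) x < 1"
proof (cases "\<bar>snd (b - a)\<bar> \<le> \<bar>fst (b - a)\<bar>")
  case True thus ?thesis using seg_lattice_near_segment_flat q by blast
next
  case False
  have flat: "\<bar>snd (prod.swap b - prod.swap a)\<bar> \<le> \<bar>fst (prod.swap b - prod.swap a)\<bar>"
    using False by (cases a, cases b) simp
  have "prod.swap q \<in> seg_lattice (prod.swap a) (prod.swap b)"
    using q unfolding seg_lattice_steep[OF False] by auto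
  then obtain x where x: "x \<in> closed_segment a b" "dist (of_lattice (prod.swap q)) (prod.swap x) < 1"
    using seg_lattice_near_segment_flat[OF flat] unfolding closed_segment_swap by blast
  have "dist (of_lattice q) x = dist (of_lattice (prod.swap q)) (prod.swap x)"
    by (cases q, cases x) (simp add: of_lattice_def dist_Pair_Pair add.commute)
  thus ?thesis using x by metis
qed

lemma ray_separation:
  fixes u v :: "'a::euclidean_space"
  assumes off_ray: "\<And>t. 0 \<le> t \<Longrightarrow> u \<noteq> t *\<^sub>R v"
  shows "\<exists>\<delta>>0. \<forall>s\<ge>0. \<forall>t\<ge>0. \<delta> * s \<le> norm (s *\<^sub>R u - t *\<^sub>R v)"
proof -
  define ray where "ray = (\<lambda>t. t *\<^sub>R v) ` {0..}"
  have "closed ray"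
  proof (cases "v = 0")
    case True
    hence "ray = {0}" by (auto simp: ray_def image_iff intro: bexI[of _ 0])
    thus ?thesis by simp
  next
    case False
    have "linear (\<lambda>t::real. t *\<^sub>R v)" by (rule bounded_linear.linear[OF bounded_linear_scaleR_left])
    moreover have "inj (\<lambda>t::real. t *\<^sub>R v)" using False by (auto simp: inj_on_def)
    ultimately show ?thesis unfolding ray_def by (rule closed_injective_linear_image[OF closed_atLeast])
  qed
  moreover have "ray \<noteq> {}" "u \<notin> ray" using off_ray by (auto simp: ray_def)
  ultimately have pos: "infdist u ray > 0" by (rule infdist_pos_not_in_closed)
  have "infdist u ray * s \<le> norm (s *\<^sub>R u - t *\<^sub>R v)" if "0 \<le> s" "0 \<le> t" for s t
  proof (cases "s = 0")
    case False
    have "(t / s) *\<^sub>R v \<in> ray" using that False by (auto simp: ray_def)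
    hence "infdist u ray \<le> norm (u - (t / s) *\<^sub>R v)" by (metis infdist_le dist_norm)
    hence "infdist u ray * s \<le> norm (u - (t / s) *\<^sub>R v) * s" using that(1) by (rule mult_right_mono)
    also have "\<dots> = norm (s *\<^sub>R (u - (t / s) *\<^sub>R v))" using that(1) by (simp add: mult.commute)
    also have "s *\<^sub>R (u - (t / s) *\<^sub>R v) = s *\<^sub>R u - t *\<^sub>R v"
      using False by (simp add: scaleR_diff_right)
    finally show ?thesis .
  qed simp
  with pos show ?thesis by blast
qed

lemma segments_at_vertex_separated:
  fixes w b c :: "'a::euclidean_space"
  assumes wb: "w \<noteq> b" and meet: "closed_segment w b \<inter> closed_segment w c \<subseteq> {w}"
  shows "\<exists>\<delta>>0. \<forall>x\<in>closed_segment w b. \<forall>y\<in>closed_segment w c. \<delta> * dist x w \<le> dist x y"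
proof -
  have "b - w \<noteq> t *\<^sub>R (c - w)" if "0 \<le> t" for t
  proof
    assume along: "b - w = t *\<^sub>R (c - w)"
    define s where "s = min 1 (1 / t)"
    have "t \<noteq> 0" using along wb by auto
    hence s: "0 < s" "s \<le> 1" "0 \<le> s * t" "s * t \<le> 1"
      using that by (auto simp: s_def min_def field_simps)
    have "w + s *\<^sub>R (b - w) = (1 - s) *\<^sub>R w + s *\<^sub>R b" by (simp add: algebra_simps)
    hence "w + s *\<^sub>R (b - w) \<in> closed_segment w b" using s(1,2) unfolding in_segment by (intro exI[of _ s]) simp
    moreover have "w + s *\<^sub>R (b - w) = (1 - s * t) *\<^sub>R w + (s * t) *\<^sub>R c"
      by (simp add: along algebra_simps)
    hence "w + s *\<^sub>R (b - w) \<in> closed_segment w c" using s(3,4) unfolding in_segment by blast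
    ultimately have "w + s *\<^sub>R (b - w) = w" using meet by blast
    thus False using s(1) wb by simp
  qed
  then obtain \<delta> where \<delta>: "\<delta> > 0"
      "\<And>s t. 0 \<le> s \<Longrightarrow> 0 \<le> t \<Longrightarrow> \<delta> * s \<le> norm (s *\<^sub>R (b - w) - t *\<^sub>R (c - w))"
    using ray_separation[of "b - w" "c - w"] by blast
  show ?thesis
  proof (intro exI[of _ "\<delta> / norm (b - w)"] conjI ballI)
    show "\<delta> / norm (b - w) > 0" using \<delta>(1) wb by simp
  next
    fix x y assume "x \<in> closed_segment w b" "y \<in> closed_segment w c"
    then obtain s t where s: "0 \<le> s" "x = (1 - s) *\<^sub>R w + s *\<^sub>R b"
        and t: "0 \<le> t" "y = (1 - t) *\<^sub>R w + t *\<^sub>R c"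
      unfolding in_segment by blast
    have "x - w = s *\<^sub>R (b - w)" "x - y = s *\<^sub>R (b - w) - t *\<^sub>R (c - w)"
      unfolding s(2) t(2) by (simp_all add: algebra_simps)
    hence "dist x w = s * norm (b - w)" "dist x y = norm (s *\<^sub>R (b - w) - t *\<^sub>R (c - w))"
      using s(1) by (simp_all add: dist_norm)
    thus "\<delta> / norm (b - w) * dist x w \<le> dist x y" using \<delta>(2)[OF s(1) t(1)] wb by simp
  qed
qed

(* A segment through w meeting [w, f] only in w separates from it at a linear rate: split
   it at w into two segments issuing from w. *)
lemma segment_through_vertex_separated:
  fixes w f c d :: "'a::euclidean_space"
  assumes wf: "w \<noteq> f" and w: "w \<in> closed_segment c d"
    and meet: "closed_segment w f \<inter> closed_segment c d \<subseteq> {w}"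
  shows "\<exists>\<delta>>0. \<forall>x\<in>closed_segment w f. \<forall>y\<in>closed_segment c d. \<delta> * dist x w \<le> dist x y"
proof -
  have cd: "closed_segment c d = closed_segment w c \<union> closed_segment w d"
    using Un_closed_segment[OF w] by (simp add: closed_segment_commute)
  have "closed_segment w f \<inter> closed_segment w c \<subseteq> {w}" "closed_segment w f \<inter> closed_segment w d \<subseteq> {w}"
    using meet cd by blast+
  then obtain \<delta>1 \<delta>2 where "\<delta>1 > 0" "\<delta>2 > 0"
    and \<delta>1: "\<forall>x\<in>closed_segment w f. \<forall>y\<in>closed_segment w c. \<delta>1 * dist x w \<le> dist x y"
    and \<delta>2: "\<forall>x\<in>closed_segment w f. \<forall>y\<in>closed_segment w d. \<delta>2 * dist x w \<le> dist x y"
    using segments_at_vertex_separated[OF wf] by meson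
  have "min \<delta>1 \<delta>2 * dist x w \<le> dist x y"
    if "x \<in> closed_segment w f" "y \<in> closed_segment c d" for x y
  proof -
    have "min \<delta>1 \<delta>2 * dist x w \<le> \<delta>1 * dist x w" "min \<delta>1 \<delta>2 * dist x w \<le> \<delta>2 * dist x w"
      by (simp_all add: mult_right_mono)
    moreover have "y \<in> closed_segment w c \<or> y \<in> closed_segment w d" using that(2) cd by blast
    ultimately show ?thesis using \<delta>1 \<delta>2 that(1) by force
  qed
  moreover have "min \<delta>1 \<delta>2 > 0" using \<open>\<delta>1 > 0\<close> \<open>\<delta>2 > 0\<close> by simp
  ultimately show ?thesis by blast
qed

(* A segment disjoint from a closed set T stays at positive distance from T, which
   dominates a fixed multiple of the distance to an endpoint. *)
lemma segment_disjoint_separated: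
  fixes a b :: "'a::euclidean_space"
  assumes "closed T" and disj: "closed_segment a b \<inter> T = {}"
  shows "\<exists>\<delta>>0. \<forall>x\<in>closed_segment a b. \<forall>y\<in>T. \<delta> * dist x a \<le> dist x y"
proof -
  obtain e where e: "e > 0" "\<forall>x\<in>closed_segment a b. \<forall>y\<in>T. e \<le> dist x y"
    using separate_compact_closed[OF compact_segment assms(1) disj] by blast
  define D where "D = dist a b + 1"
  have D: "D > 0" unfolding D_def using zero_le_dist[of a b] by linarith
  have "e / D * dist x a \<le> dist x y" if "x \<in> closed_segment a b" "y \<in> T" for x y
  proof -
    have "dist x a \<le> D" using dist_in_closed_segment[OF that(1)] by (simp add: D_def)
    hence "e / D * dist x a \<le> e / D * D" using e(1) D by (intro mult_left_mono) simp_all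
    thus ?thesis using e(2) that D by fastforce
  qed
  moreover have "e / D > 0" using e(1) D by simp
  ultimately show ?thesis by blast
qed

(* Two segments meeting at most in endpoints of the first one separate linearly away from
   some point w: either they are disjoint or w is a common endpoint. *)
lemma segments_separated:
  fixes a b c d :: "'a::euclidean_space"
  assumes ab: "a \<noteq> b" and meet: "closed_segment a b \<inter> closed_segment c d \<subseteq> {a, b}"
  shows "\<exists>w \<delta>. \<delta> > 0 \<and> (\<forall>x\<in>closed_segment a b. \<forall>y\<in>closed_segment c d. \<delta> * dist x w \<le> dist x y)"
proof (cases "closed_segment a b \<inter> closed_segment c d = {}")
  case True
  thus ?thesis using segment_disjoint_separated[OF closed_segment] by blast
next
  case False
  then obtain w f where w: "w \<in> closed_segment c d" and ends: "{w, f} = {a, b}"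
    using meet by blast
  have f: "closed_segment a b = closed_segment w f" "w \<noteq> f"
    using ends ab by (auto simp: doubleton_eq_iff closed_segment_commute)
  have "f \<notin> closed_segment c d"
  proof
    assume "f \<in> closed_segment c d"
    hence "closed_segment w f \<subseteq> closed_segment c d" using w by (simp add: subset_closed_segment)
    hence "closed_segment a b \<subseteq> {a, b}" using f(1) meet by blast
    hence "finite (closed_segment a b)" by (rule finite_subset) simp
    thus False using ab by (simp add: finite_closed_segment)
  qed
  moreover have "closed_segment w f \<inter> closed_segment c d \<subseteq> {w, f}"
    using meet f(1) ends by simp
  ultimately have "closed_segment w f \<inter> closed_segment c d \<subseteq> {w}" by blast
  then obtain \<delta> where "\<delta> > 0"
      "\<forall>x\<in>closed_segment w f. \<forall>y\<in>closed_segment c d. \<delta> * dist x w \<le> dist x y"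
    using segment_through_vertex_separated[OF f(2) w] by blast
  thus ?thesis unfolding f(1) by blast
qed

lemma card_lattice_points_in_ball:
  fixes c :: "real \<times> real" and C :: real
  assumes "0 \<le> C"
  shows "finite {q. dist (of_lattice q) c \<le> C} \<and> real (card {q. dist (of_lattice q) c \<le> C}) \<le> (2 * C + 1)\<^sup>2"
proof -
  define I1 where "I1 = {\<lceil>fst c - C\<rceil>..\<lfloor>fst c + C\<rfloor>}"
  define I2 where "I2 = {\<lceil>snd c - C\<rceil>..\<lfloor>snd c + C\<rfloor>}"
  have sub: "{q. dist (of_lattice q) c \<le> C} \<subseteq> I1 \<times> I2"
  proof
    fix q assume "q \<in> {q. dist (of_lattice q) c \<le> C}"
    hence "dist (fst (of_lattice q)) (fst c) \<le> C" "dist (snd (of_lattice q)) (snd c) \<le> C"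
      using dist_fst_le[of "of_lattice q" c] dist_snd_le[of "of_lattice q" c] by auto
    thus "q \<in> I1 \<times> I2"
      by (cases q) (auto simp: I1_def I2_def of_lattice_def dist_real_def ceiling_le_iff le_floor_iff abs_le_iff)
  qed
  have "real (card I1) \<le> 2 * C + 1" "real (card I2) \<le> 2 * C + 1"
    using card_integer_interval[of "fst c - C" "fst c + C"] card_integer_interval[of "snd c - C" "snd c + C"] assms
    by (simp_all add: I1_def I2_def abs_le_iff)
  hence "real (card (I1 \<times> I2)) \<le> (2 * C + 1)\<^sup>2"
    by (simp add: card_cartesian_product power2_eq_square mult_mono)
  moreover have "finite (I1 \<times> I2)" by (simp add: I1_def I2_def)
  ultimately show ?thesis using sub card_mono[OF _ sub] finite_subset[OF sub] by fastforce
qed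

lemma dist_scaleR_scaleR: "dist (k *\<^sub>R x) (k *\<^sub>R y) = \<bar>k\<bar> * dist x (y :: 'a::real_normed_vector)"
  by (simp add: dist_norm scaleR_right_diff_distrib[symmetric])

lemma closed_segment_scaleR:
  "closed_segment (k *\<^sub>R a) (k *\<^sub>R b) = (\<lambda>x. k *\<^sub>R x) ` closed_segment a b"
  by (rule closed_segment_linear_image) (rule linear_scaleR)

(* The lattice approximations of two dilated segments as above share a number of points
   that is bounded independently of the dilation factor: shared points lie within
   distance 1 + 2 / delta of the dilated separation point. *)
lemma seg_lattice_overlap_bounded:
  fixes a b c d :: "real \<times> real"
  assumes ab: "a \<noteq> b" and meet: "closed_segment a b \<inter> closed_segment c d \<subseteq> {a, b}"
  shows "\<exists>K. \<forall>k\<ge>0. real (card (seg_lattice (k *\<^sub>R a) (k *\<^sub>R b) \<inter> seg_lattice (k *\<^sub>R c) (k *\<^sub>R d))) \<le> K"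
proof -
  obtain w \<delta> where \<delta>: "\<delta> > 0"
      "\<forall>x\<in>closed_segment a b. \<forall>y\<in>closed_segment c d. \<delta> * dist x w \<le> dist x y"
    using segments_separated[OF ab meet] by blast
  define C where "C = 1 + 2 / \<delta>"
  have "real (card (seg_lattice (k *\<^sub>R a) (k *\<^sub>R b) \<inter> seg_lattice (k *\<^sub>R c) (k *\<^sub>R d))) \<le> (2 * C + 1)\<^sup>2"
    if k: "0 \<le> k" for k
  proof -
    have "seg_lattice (k *\<^sub>R a) (k *\<^sub>R b) \<inter> seg_lattice (k *\<^sub>R c) (k *\<^sub>R d)
          \<subseteq> {q. dist (of_lattice q) (k *\<^sub>R w) \<le> C}"
    proof
      fix q assume q: "q \<in> seg_lattice (k *\<^sub>R a) (k *\<^sub>R b) \<inter> seg_lattice (k *\<^sub>R c) (k *\<^sub>R d)"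
      obtain x where x: "x \<in> closed_segment a b" "dist (of_lattice q) (k *\<^sub>R x) < 1"
        using q seg_lattice_near_segment[of q "k *\<^sub>R a" "k *\<^sub>R b"] unfolding closed_segment_scaleR by blast
      obtain y where y: "y \<in> closed_segment c d" "dist (of_lattice q) (k *\<^sub>R y) < 1"
        using q seg_lattice_near_segment[of q "k *\<^sub>R c" "k *\<^sub>R d"] unfolding closed_segment_scaleR by blast
      have "k * dist x y < 2"
        using dist_triangle3[of "k *\<^sub>R x" "k *\<^sub>R y" "of_lattice q"] x(2) y(2) k
        by (simp add: dist_scaleR_scaleR)
      moreover have "k * (\<delta> * dist x w) \<le> k * dist x y" using \<delta>(2) x(1) y(1) k by (simp add: mult_left_mono)
      ultimately have "k * dist x w < 2 / \<delta>" using \<delta>(1) by (simp add: field_simps)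
      hence "dist (k *\<^sub>R x) (k *\<^sub>R w) < 2 / \<delta>" using k by (simp add: dist_scaleR_scaleR)
      thus "q \<in> {q. dist (of_lattice q) (k *\<^sub>R w) \<le> C}"
        using x(2) dist_triangle[of "of_lattice q" "k *\<^sub>R w" "k *\<^sub>R x"] by (simp add: C_def)
    qed
    moreover have "0 \<le> C" using \<delta>(1) by (simp add: C_def)
    ultimately show ?thesis
      using card_lattice_points_in_ball[of C "k *\<^sub>R w"] card_mono by (smt (verit) of_nat_le_iff)
  qed
  thus ?thesis by blast
qed

lemma sum_card_le_card_Union_plus_overlaps:
  fixes A :: "nat \<Rightarrow> 'a set"
  assumes "\<And>r. r < n \<Longrightarrow> finite (A r)"
  shows "(\<Sum>r<n. card (A r)) \<le> card (\<Union>r<n. A r) + (\<Sum>j<n. \<Sum>i<j. card (A i \<inter> A j))"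
  using assms
proof (induction n)
  case (Suc n)
  let ?U = "\<Union>r<n. A r"
  have "finite ?U" "finite (A n)" using Suc.prems by auto
  hence union: "card (?U \<union> A n) + card (?U \<inter> A n) = card ?U + card (A n)"
    by (rule card_Un_Int[symmetric])
  have "card (?U \<inter> A n) \<le> (\<Sum>i<n. card (A i \<inter> A n))"
    using card_UN_le[of "{..<n}" "\<lambda>i. A i \<inter> A n"] by (simp add: Int_UN_distrib2)
  moreover have "(\<Union>r<Suc n. A r) = ?U \<union> A n" by (auto simp: lessThan_Suc)
  ultimately show ?case using Suc union by simp
qed simp

lemma card_Union_close_to_sum:
  fixes A :: "nat \<Rightarrow> 'a set" and m :: "nat \<Rightarrow> real" and K :: "nat \<Rightarrow> nat \<Rightarrow> real"
  assumes fin: "\<And>r. r < n \<Longrightarrow> finite (A r)"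
    and near: "\<And>r. r < n \<Longrightarrow> \<bar>real (card (A r)) - m r\<bar> \<le> 1"
    and overlap: "\<And>i j. i < j \<Longrightarrow> j < n \<Longrightarrow> real (card (A i \<inter> A j)) \<le> K i j"
  shows "\<bar>real (card (\<Union>r<n. A r)) - (\<Sum>r<n. m r)\<bar> \<le> real n + (\<Sum>j<n. \<Sum>i<j. K i j)"
proof -
  have "\<bar>(\<Sum>r<n. real (card (A r))) - (\<Sum>r<n. m r)\<bar> = \<bar>\<Sum>r<n. real (card (A r)) - m r\<bar>"
    by (simp add: sum_subtractf)
  also have "\<dots> \<le> (\<Sum>r<n. \<bar>real (card (A r)) - m r\<bar>)" by (rule sum_abs)
  also have "\<dots> \<le> (\<Sum>r<n. 1)" using near by (intro sum_mono) simp
  finally have sum_near: "\<bar>(\<Sum>r<n. real (card (A r))) - (\<Sum>r<n. m r)\<bar> \<le> real n" by simp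
  have overlaps: "(\<Sum>j<n. \<Sum>i<j. real (card (A i \<inter> A j))) \<le> (\<Sum>j<n. \<Sum>i<j. K i j)"
    using overlap by (intro sum_mono) auto
  have "real (card (\<Union>r<n. A r)) \<le> (\<Sum>r<n. real (card (A r)))"
    using card_UN_le[of "{..<n}" A] by (simp flip: of_nat_sum)
  moreover have "(\<Sum>r<n. real (card (A r))) \<le> real (card (\<Union>r<n. A r)) + (\<Sum>j<n. \<Sum>i<j. real (card (A i \<inter> A j)))"
    using sum_card_le_card_Union_plus_overlaps[of n A] fin by (simp flip: of_nat_sum of_nat_add)
  moreover have "0 \<le> (\<Sum>j<n. \<Sum>i<j. real (card (A i \<inter> A j)))" by (simp add: sum_nonneg)
  ultimately show ?thesis using sum_near overlaps by linarith
qed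

lemma simple_polygon_edge_nondegenerate:
  assumes "simple_polygon R p" "r < R"
  shows "p r \<noteq> p (Suc r mod R)"
proof -
  have R: "R \<ge> 3" "inj_on p {..<R}" using assms(1) by (auto simp: simple_polygon_def)
  have "Suc r mod R \<noteq> r"
  proof (cases "Suc r < R")
    case False
    hence "Suc r = R" using assms(2) by simp
    thus ?thesis using R(1) by auto
  qed simp
  moreover have "Suc r mod R < R" using R(1) by simp
  ultimately show ?thesis using R(2) assms(2) by (auto dest: inj_onD)
qed

lemma simple_polygon_edges_meet:
  assumes "simple_polygon R p" "i < R" "j < R" "i \<noteq> j"
  shows "closed_segment (p i) (p (Suc i mod R)) \<inter> closed_segment (p j) (p (Suc j mod R))
           \<subseteq> {p i, p (Suc i mod R)}"
  using assms unfolding simple_polygon_def by blast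

lemma perimeter_scaleR: "0 \<le> k \<Longrightarrow> perimeter R (\<lambda>i. k *\<^sub>R p i) = k * perimeter R p"
  by (simp add: perimeter_def dist_scaleR_scaleR sum_distrib_left)

lemma simple_polygon_perimeter_pos:
  assumes "simple_polygon R p" shows "perimeter R p > 0"
proof -
  have R: "0 < R" using assms by (simp add: simple_polygon_def)
  have "0 < dist (p 0) (p (Suc 0 mod R))" using simple_polygon_edge_nondegenerate[OF assms R] by simp
  also have "\<dots> \<le> perimeter R p"
    unfolding perimeter_def using R by (intro member_le_sum) auto
  finally show ?thesis .
qed

lemma polygon_lattice_card_linear:
  assumes poly: "simple_polygon R p"
  shows "\<exists>B. \<forall>k::nat. \<bar>real (card (polygon_lattice R (\<lambda>i. real k *\<^sub>R p i)))
                     - real k * (\<Sum>r<R. cheb_length (p (Suc r mod R) - p r))\<bar> \<le> B"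
proof -
  define E where "E k r = seg_lattice (k *\<^sub>R p r) (k *\<^sub>R p (Suc r mod R))" for k :: real and r
  have "\<exists>K. \<forall>k\<ge>0. real (card (E k i \<inter> E k j)) \<le> K" if "i < j" "j < R" for i j
    unfolding E_def using that
    by (intro seg_lattice_overlap_bounded simple_polygon_edge_nondegenerate[OF poly]
        simple_polygon_edges_meet[OF poly]) auto
  hence "\<forall>i j. \<exists>K. i < j \<and> j < R \<longrightarrow> (\<forall>k\<ge>0. real (card (E k i \<inter> E k j)) \<le> K)"
    by blast
  then obtain K where K: "\<And>i j k. i < j \<Longrightarrow> j < R \<Longrightarrow> 0 \<le> k \<Longrightarrow> real (card (E k i \<inter> E k j)) \<le> K i j"
    by metis
  have "\<bar>real (card (\<Union>r<R. E (real k) r)) - (\<Sum>r<R. real k * cheb_length (p (Suc r mod R) - p r))\<bar>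
          \<le> real R + (\<Sum>j<R. \<Sum>i<j. K i j)" for k :: nat
  proof (rule card_Union_close_to_sum)
    fix r
    have "real k *\<^sub>R p (Suc r mod R) - real k *\<^sub>R p r = real k *\<^sub>R (p (Suc r mod R) - p r)"
      by (simp add: scaleR_diff_right)
    thus "finite (E (real k) r)" "\<bar>real (card (E (real k) r)) - real k * cheb_length (p (Suc r mod R) - p r)\<bar> \<le> 1"
      using card_seg_lattice[of "real k *\<^sub>R p r" "real k *\<^sub>R p (Suc r mod R)"]
      by (simp_all add: E_def cheb_length_scaleR)
  qed (use K in simp)
  thus ?thesis unfolding polygon_lattice_def E_def by (auto simp: sum_distrib_left)
qed

lemma tendsto_ratio_of_linear_growth:
  fixes c :: "nat \<Rightarrow> real"
  assumes "\<And>k. \<bar>c k - real k * S\<bar> \<le> B"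
  shows "(\<lambda>k. c k / real k) \<longlonglongrightarrow> S"
proof -
  have "(\<lambda>k. c k / real k - S) \<longlonglongrightarrow> 0"
  proof (rule Lim_null_comparison)
    show "\<forall>\<^sub>F k in sequentially. norm (c k / real k - S) \<le> B * inverse (real k)"
    proof (rule eventually_sequentiallyI[of 1])
      fix k :: nat assume "1 \<le> k"
      hence "c k / real k - S = (c k - real k * S) / real k" by (simp add: field_simps)
      also have "\<bar>\<dots>\<bar> \<le> B / real k" using assms[of k] by (simp add: divide_right_mono)
      finally show "norm (c k / real k - S) \<le> B * inverse (real k)" by (simp add: divide_inverse)
    qed
    show "(\<lambda>k. B * inverse (real k)) \<longlonglongrightarrow> 0"
      by (rule tendsto_mult_right_zero) (rule lim_inverse_n)
  qed
  thus ?thesis by (rule LIM_zero_cancel)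
qed

theorem lemma6p4:
  fixes R :: nat and p :: "nat \<Rightarrow> real \<times> real"
  assumes "simple_polygon R p"
  shows "(\<lambda>k::nat. real (card (polygon_lattice R (\<lambda>i. real k *\<^sub>R p i)))
                    / perimeter R (\<lambda>i. real k *\<^sub>R p i))
         \<longlonglongrightarrow> (\<Sum>r<R. 1 / sqrt (1 + (lam (p (Suc r mod R) - p r))\<^sup>2)
                        * (dist (p r) (p (Suc r mod R)) / perimeter R p))"
proof -
  define P where "P = perimeter R p"
  define S where "S = (\<Sum>r<R. cheb_length (p (Suc r mod R) - p r))"
  obtain B where "\<And>k. \<bar>real (card (polygon_lattice R (\<lambda>i. real k *\<^sub>R p i))) - real k * S\<bar> \<le> B"
    using polygon_lattice_card_linear[OF assms] unfolding S_def by blast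
  hence "(\<lambda>k. real (card (polygon_lattice R (\<lambda>i. real k *\<^sub>R p i))) / real k / P) \<longlonglongrightarrow> S / P"
    using simple_polygon_perimeter_pos[OF assms]
    by (intro tendsto_divide tendsto_ratio_of_linear_growth tendsto_const) (auto simp: P_def)
  moreover have "perimeter R (\<lambda>i. real k *\<^sub>R p i) = real k * P" for k :: nat
    by (simp add: perimeter_scaleR P_def)
  moreover have "1 / sqrt (1 + (lam (p (Suc r mod R) - p r))\<^sup>2) * (dist (p r) (p (Suc r mod R)) / P)
      = cheb_length (p (Suc r mod R) - p r) / P" for r
    using norm_div_sqrt_lam[of "p (Suc r mod R) - p r"] by (simp add: dist_norm norm_minus_commute)
  ultimately show ?thesis by (simp add: S_def sum_divide_distrib P_def[symmetric] mult.commute)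
qed

end
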